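(* Let $\mathfrak{n}^{\mathbb{Q}}$ be a rational nilpotent Lie algebra of nilpotency class $c$ and $f$ an Anosov automorphism of $\mathfrak{n}^{\mathbb{Q}}$. Then $\min(\mathrm{sg}(f))\geq c$, i.e. $f$ has at least $c$ eigenvalues (with multiplicity) of absolute value $<1$ and at least $c$ eigenvalues of absolute value $>1$.
   Context: The lower central series is $\gamma_1(\mathfrak{n})=\mathfrak{n}$, $\gamma_i(\mathfrak{n})=[\mathfrak{n},\gamma_{i-1}(\mathfrak{n})]$; $\mathfrak{n}$ has nilpotency class $c$ if $\gamma_{c+1}(\mathfrak{n})=0\neq\gamma_c(\mathfrak{n})$. An automorphism of a rational Lie algebra is Anosov if it is hyperbolic (no eigenvalue of absolute value $1$) and integer-like (characteristic polynomial with integer coefficients and determinant $\pm1$). Its signature $\mathrm{sg}(f)$ is the set $\{p,q\}$ with $p$ the number of eigenvalues of absolute value $<1$ and $q$ the number of absolute value $>1$. *)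

theory Defs
  imports "Jordan_Normal_Form.Char_Poly" "HOL-Computational_Algebra.Polynomial"
begin

text \<open>A finite-dimensional rational Lie algebra is modelled as rat^n (coordinates
w.r.t. a basis), i.e. carrier_vec n, with a bracket br.\<close>

definition lie_algebra :: "nat \<Rightarrow> (rat vec \<Rightarrow> rat vec \<Rightarrow> rat vec) \<Rightarrow> bool" where
  "lie_algebra n br \<longleftrightarrow>
     (\<forall>x\<in>carrier_vec n. \<forall>y\<in>carrier_vec n. br x y \<in> carrier_vec n) \<and>
     (\<forall>x\<in>carrier_vec n. \<forall>y\<in>carrier_vec n. \<forall>z\<in>carrier_vec n. \<forall>a b.
        br (a \<cdot>\<^sub>v x + b \<cdot>\<^sub>v y) z = a \<cdot>\<^sub>v br x z + b \<cdot>\<^sub>v br y z \<and>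
        br z (a \<cdot>\<^sub>v x + b \<cdot>\<^sub>v y) = a \<cdot>\<^sub>v br z x + b \<cdot>\<^sub>v br z y) \<and>
     (\<forall>x\<in>carrier_vec n. br x x = 0\<^sub>v n) \<and>
     (\<forall>x\<in>carrier_vec n. \<forall>y\<in>carrier_vec n. \<forall>z\<in>carrier_vec n.
        br x (br y z) + br y (br z x) + br z (br x y) = 0\<^sub>v n)"

inductive_set lspan :: "nat \<Rightarrow> rat vec set \<Rightarrow> rat vec set" for n S where
  zero: "0\<^sub>v n \<in> lspan n S"
| gen: "s \<in> S \<Longrightarrow> s \<in> lspan n S"
| add: "x \<in> lspan n S \<Longrightarrow> y \<in> lspan n S \<Longrightarrow> x + y \<in> lspan n S"
| smult: "x \<in> lspan n S \<Longrightarrow> c \<cdot>\<^sub>v x \<in> lspan n S"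

text \<open>Lower central series: lcs n br i = gamma_i (1-indexed; index 0 also the whole algebra).\<close>
fun lcs :: "nat \<Rightarrow> (rat vec \<Rightarrow> rat vec \<Rightarrow> rat vec) \<Rightarrow> nat \<Rightarrow> rat vec set" where
  "lcs n br 0 = carrier_vec n"
| "lcs n br (Suc 0) = carrier_vec n"
| "lcs n br (Suc (Suc i)) =
     lspan n {br x y | x y. x \<in> carrier_vec n \<and> y \<in> lcs n br (Suc i)}"

definition nilpotency_class :: "nat \<Rightarrow> (rat vec \<Rightarrow> rat vec \<Rightarrow> rat vec) \<Rightarrow> nat \<Rightarrow> bool" where
  "nilpotency_class n br c \<longleftrightarrow> lcs n br (Suc c) = {0\<^sub>v n} \<and> lcs n br c \<noteq> {0\<^sub>v n}"

definition lie_automorphism :: "nat \<Rightarrow> (rat vec \<Rightarrow> rat vec \<Rightarrow> rat vec) \<Rightarrow> rat mat \<Rightarrow> bool" where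
  "lie_automorphism n br f \<longleftrightarrow> f \<in> carrier_mat n n \<and> invertible_mat f \<and>
     (\<forall>x\<in>carrier_vec n. \<forall>y\<in>carrier_vec n. f *\<^sub>v br x y = br (f *\<^sub>v x) (f *\<^sub>v y))"

text \<open>Complex characteristic polynomial; eigenvalues (with multiplicity) are its roots.\<close>
definition cpoly :: "rat mat \<Rightarrow> complex poly" where
  "cpoly f = char_poly (map_mat of_rat f)"

definition hyperbolic :: "rat mat \<Rightarrow> bool" where
  "hyperbolic f \<longleftrightarrow> (\<forall>z. poly (cpoly f) z = 0 \<longrightarrow> cmod z \<noteq> 1)"

definition integer_like :: "rat mat \<Rightarrow> bool" where
  "integer_like f \<longleftrightarrow> (\<forall>i. coeff (char_poly f) i \<in> \<int>) \<and> (det f = 1 \<or> det f = -1)"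

definition anosov :: "nat \<Rightarrow> (rat vec \<Rightarrow> rat vec \<Rightarrow> rat vec) \<Rightarrow> rat mat \<Rightarrow> bool" where
  "anosov n br f \<longleftrightarrow> lie_automorphism n br f \<and> hyperbolic f \<and> integer_like f"

definition n_small :: "rat mat \<Rightarrow> nat" where
  "n_small f = (\<Sum>z\<in>{z. poly (cpoly f) z = 0 \<and> cmod z < 1}. order z (cpoly f))"

definition n_large :: "rat mat \<Rightarrow> nat" where
  "n_large f = (\<Sum>z\<in>{z. poly (cpoly f) z = 0 \<and> cmod z > 1}. order z (cpoly f))"

end

theory Submission
  imports Defs "Berlekamp_Zassenhaus.Factor_Bound"
begin

text \<open>The lower central series \<open>\<gamma>\<^sub>1 \<supset> \<gamma>\<^sub>2 \<supset> \<dots> \<supset> \<gamma>\<^bsub>c+1\<^esub> = 0\<close> is a strictly decreasing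
  flag of \<open>f\<close>-invariant subspaces. Choosing a basis adapted to \<open>\<gamma>\<^sub>2\<close> makes \<open>f\<close> block upper
  triangular, so \<open>\<chi>\<^sub>f\<close> is the product of the characteristic polynomial of \<open>f\<close> on \<open>\<gamma>\<^sub>2\<close> and that
  of the induced map on the nonzero quotient \<open>\<gamma>\<^sub>1/\<gamma>\<^sub>2\<close>. By Gauss's lemma both factors are again
  monic integer polynomials with constant term \<open>\<plusminus>1\<close> and no roots on the unit circle. Since the
  moduli of the roots of such a polynomial multiply to \<open>1\<close>, the quotient factor has a root inside
  and a root outside the unit circle; induction along the flag gives \<open>c\<close> of each.\<close>

hide_const (open) UnivPoly.coeff Coset.order

section \<open>Roots inside and outside the unit circle\<close>

definition root_count :: "(complex \<Rightarrow> bool) \<Rightarrow> complex poly \<Rightarrow> nat" where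
  "root_count P p = (\<Sum>z\<in>{z. poly p z = 0 \<and> P z}. order z p)"

lemma root_count_mult:
  assumes pq: "p * q \<noteq> 0"
  shows "root_count P (p * q) = root_count P p + root_count P q"
proof -
  let ?S = "\<lambda>p. {z. poly p z = 0 \<and> P z}"
  have fin: "finite (?S (p * q))"
    using poly_roots_finite[OF pq] by (rule rev_finite_subset) auto
  have restrict: "(\<Sum>z\<in>?S (p * q). order z r) = (\<Sum>z\<in>?S r. order z r)"
    if "\<And>z. poly r z = 0 \<Longrightarrow> poly (p * q) z = 0" for r
    by (rule sum.mono_neutral_right[OF fin]) (use that order_0I in blast)+
  show ?thesis
    unfolding root_count_def order_mult[OF pq] sum.distrib
    using restrict[of p] restrict[of q] by simp
qed

lemma root_count_pos:
  assumes "p \<noteq> 0" "poly p z = 0" "P z"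
  shows "0 < root_count P p"
proof -
  have "finite {z. poly p z = 0 \<and> P z}"
    using poly_roots_finite[OF assms(1)] by (rule rev_finite_subset) auto
  moreover have "0 < order z p" using assms order_root by blast
  ultimately show ?thesis unfolding root_count_def using assms
    by (metis (mono_tags, lifting) gr0I mem_Collect_eq sum_eq_0_iff)
qed

lemma monic_unimodular_roots_inside_outside:
  fixes p :: "complex poly"
  assumes monic: "monic p" and deg: "0 < degree p" and unimodular: "cmod (poly p 0) = 1"
    and hyperbolic: "\<forall>z. poly p z = 0 \<longrightarrow> cmod z \<noteq> 1"
  shows "\<exists>z. poly p z = 0 \<and> cmod z < 1" and "\<exists>z. poly p z = 0 \<and> 1 < cmod z"
proof -
  obtain as where factors: "p = (\<Prod>a\<leftarrow>as. [:- a, 1:])" and len: "length as = degree p"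
    using fundamental_theorem_algebra_factorized[of p] monic by auto
  let ?I = "{0..<length as}"
  have I: "finite ?I" "?I \<noteq> {}" using len deg by auto
  have roots: "poly p (as ! i) = 0" if "i \<in> ?I" for i
    using that unfolding factors by (auto simp: poly_prod_list prod_list_zero_iff)
  have "poly p 0 = (\<Prod>a\<leftarrow>as. - a)"
    unfolding factors by (simp add: poly_prod_list o_def)
  hence "cmod (poly p 0) = (\<Prod>i\<in>?I. cmod (as ! i))"
    by (simp add: prod.list_conv_set_nth prod_norm[symmetric])
  hence prod1: "(\<Prod>i\<in>?I. cmod (as ! i)) = 1" using unimodular by simp
  show "\<exists>z. poly p z = 0 \<and> cmod z < 1"
  proof (rule ccontr)
    assume "\<not> ?thesis"
    hence "1 < cmod (as ! i)" if "i \<in> ?I" for i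
      using roots[OF that] hyperbolic by (meson linorder_neqE_linordered_idom)
    with less_1_prod[OF I, of "\<lambda>i. cmod (as ! i)"] prod1 show False by simp
  qed
  show "\<exists>z. poly p z = 0 \<and> 1 < cmod z"
  proof (rule ccontr)
    assume "\<not> ?thesis"
    hence small: "cmod (as ! i) < 1" if "i \<in> ?I" for i
      using roots[OF that] hyperbolic by (meson linorder_neqE_linordered_idom)
    obtain i where "i \<in> ?I" using I by blast
    hence "(\<Prod>i\<in>?I. cmod (as ! i)) < (\<Prod>i\<in>?I. 1)"
      by (intro prod_mono_strict) (use small I in \<open>auto intro: less_imp_le\<close>)
    with prod1 show False by simp
  qed
qed

section \<open>Monic integer polynomials with unit constant term\<close>

definition anosov_poly :: "rat poly \<Rightarrow> bool" where
  "anosov_poly q \<longleftrightarrow> monic q \<and> (\<forall>i. coeff q i \<in> \<int>) \<and> \<bar>coeff q 0\<bar> = 1 \<and>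
     (\<forall>z. poly (map_poly of_rat q) z = 0 \<longrightarrow> cmod z \<noteq> 1)"

lemma int_coeffs_iff_of_int_poly:
  fixes q :: "'a :: floor_ceiling poly"
  shows "(\<forall>i. coeff q i \<in> \<int>) \<longleftrightarrow> (\<exists>p. q = of_int_poly p)"
proof
  assume "\<forall>i. coeff q i \<in> \<int>"
  hence "q = of_int_poly (map_poly floor q)"
    by (intro poly_eqI) (auto simp: coeff_map_poly elim!: Ints_cases)
  thus "\<exists>p. q = of_int_poly p" ..
qed auto

text \<open>An instance of Gauss's lemma.\<close>
lemma monic_factor_int_coeffs:
  fixes g h :: "rat poly"
  assumes int: "\<forall>i. coeff (g * h) i \<in> \<int>" and monic: "monic g" "monic h"
  shows "\<forall>i. coeff g i \<in> \<int>"
proof -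
  obtain p where p: "of_int_poly p = g * h" using int int_coeffs_iff_of_int_poly by metis
  have "lead_coeff (of_int_poly p :: rat poly) = 1" using p monic by (simp add: lead_coeff_mult)
  hence lead: "lead_coeff p = 1" by simp
  hence "content p = 1"
    using content_dvd_coeff[of p "degree p"] content_ge_0_int[of p] by simp
  moreover have "p \<noteq> 0" using lead by auto
  moreover obtain r rg where g: "rat_to_normalized_int_poly g = (r, rg)" by force
  moreover obtain s sh where h: "rat_to_normalized_int_poly h = (s, sh)" by force
  ultimately have "p = rg * sh" using rat_to_int_factor_content_1 p by blast
  hence "lead_coeff rg * lead_coeff sh = 1" using lead by (simp add: lead_coeff_mult)
  hence "lead_coeff rg = 1 \<or> lead_coeff rg = -1" using zmult_eq_1_iff by blast
  moreover note g_norm = rat_to_normalized_int_poly[OF g]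
  moreover have "r * rat_of_int (lead_coeff rg) = 1" using g_norm(1,2) monic by simp
  ultimately have "r = 1" using g_norm(2) by (elim disjE) auto
  hence "g = of_int_poly rg" using g_norm(1) by simp
  thus ?thesis using int_coeffs_iff_of_int_poly by blast
qed

lemma map_poly_of_rat_mult:
  "map_poly (of_rat :: rat \<Rightarrow> 'a :: field_char_0) (p * q) = map_poly of_rat p * map_poly of_rat q"
proof -
  interpret map_poly_comm_ring_hom "of_rat :: rat \<Rightarrow> 'a" ..
  show ?thesis by (rule hom_mult)
qed

lemma anosov_poly_factor:
  assumes q: "anosov_poly (g * h)" and monic: "monic g" "monic h"
  shows "anosov_poly g"
proof -
  have int_g: "\<forall>i. coeff g i \<in> \<int>" and int_h: "\<forall>i. coeff h i \<in> \<int>"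
    using q monic monic_factor_int_coeffs[of g h] monic_factor_int_coeffs[of h g]
    by (auto simp: anosov_poly_def mult.commute)
  obtain a b where a: "coeff g 0 = of_int a" and b: "coeff h 0 = of_int b"
    using int_g int_h by (meson Ints_cases)
  have "\<bar>a * b\<bar> = 1" using q a b by (simp add: anosov_poly_def coeff_mult_0 flip: of_int_mult of_int_abs)
  hence "\<bar>a\<bar> = 1" using abs_ge_zero[of a] by (auto simp: abs_mult zmult_eq_1_iff)
  hence "\<bar>coeff g 0\<bar> = 1" using a by simp
  moreover have "\<forall>z. poly (map_poly of_rat g) z = 0 \<longrightarrow> cmod z \<noteq> 1"
    using q by (auto simp: anosov_poly_def map_poly_of_rat_mult)
  ultimately show ?thesis using monic int_g by (simp add: anosov_poly_def)
qed

lemma anosov_poly_root_counts: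
  assumes q: "anosov_poly q" and deg: "0 < degree q"
  shows "0 < root_count (\<lambda>z. cmod z < 1) (map_poly of_rat q)"
    and "0 < root_count (\<lambda>z. 1 < cmod z) (map_poly of_rat q)"
proof -
  let ?p = "map_poly (of_rat :: rat \<Rightarrow> complex) q"
  have monic: "monic ?p" and "0 < degree ?p" using q deg by (auto simp: anosov_poly_def)
  moreover have "cmod (poly ?p 0) = 1"
    using q by (auto simp: anosov_poly_def poly_0_coeff_0 abs_if split: if_splits)
  moreover have "\<forall>z. poly ?p z = 0 \<longrightarrow> cmod z \<noteq> 1" using q by (simp add: anosov_poly_def)
  moreover have "?p \<noteq> 0" using monic by auto
  ultimately show "0 < root_count (\<lambda>z. cmod z < 1) ?p" "0 < root_count (\<lambda>z. 1 < cmod z) ?p"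
    using monic_unimodular_roots_inside_outside root_count_pos by metis+
qed

section \<open>Subspaces of \<open>\<FF>\<^sup>n\<close> and invariant subspaces\<close>

definition vec_subspace :: "nat \<Rightarrow> 'a :: field vec set \<Rightarrow> bool" where
  "vec_subspace n W \<longleftrightarrow> W \<subseteq> carrier_vec n \<and> 0\<^sub>v n \<in> W \<and>
     (\<forall>x\<in>W. \<forall>y\<in>W. x + y \<in> W) \<and> (\<forall>a. \<forall>x\<in>W. a \<cdot>\<^sub>v x \<in> W)"

definition col_span :: "nat \<Rightarrow> 'a :: field vec list \<Rightarrow> 'a vec set" where
  "col_span n ws = {mat_of_cols n ws *\<^sub>v x | x. x \<in> carrier_vec (length ws)}"

definition lin_indpt_cols :: "nat \<Rightarrow> 'a :: field vec list \<Rightarrow> bool" where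
  "lin_indpt_cols n ws \<longleftrightarrow>
     (\<forall>x\<in>carrier_vec (length ws). mat_of_cols n ws *\<^sub>v x = 0\<^sub>v n \<longrightarrow> x = 0\<^sub>v (length ws))"

lemma vec_subspace_carrier: "vec_subspace n (carrier_vec n)"
  by (auto simp: vec_subspace_def)

lemma mult_mat_vec_zero: "A \<in> carrier_mat nr nc \<Longrightarrow> A *\<^sub>v 0\<^sub>v nc = (0\<^sub>v nr :: 'a :: semiring_0 vec)"
  by (intro eq_vecI) auto

lemma mat_of_cols_append_mult_vec:
  fixes a b :: "'a :: field vec"
  assumes "set ws \<subseteq> carrier_vec n" "set us \<subseteq> carrier_vec n"
    and a: "a \<in> carrier_vec (length ws)" and b: "b \<in> carrier_vec (length us)"
  shows "mat_of_cols n (ws @ us) *\<^sub>v (a @\<^sub>v b) = mat_of_cols n ws *\<^sub>v a + mat_of_cols n us *\<^sub>v b"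
proof (rule eq_vecI)
  fix i assume "i < dim_vec (mat_of_cols n ws *\<^sub>v a + mat_of_cols n us *\<^sub>v b)"
  hence i: "i < n" by simp
  let ?k = "length ws" and ?l = "length us"
  have split: "(\<Sum>j<?k + l. f j) = (\<Sum>j<?k. f j) + (\<Sum>j<l. f (?k + j))" for f :: "nat \<Rightarrow> 'a" and l
    by (induction l) (auto simp: add.assoc)
  have "(mat_of_cols n (ws @ us) *\<^sub>v (a @\<^sub>v b)) $ i = (\<Sum>j<?k + ?l. (ws @ us) ! j $ i * (a @\<^sub>v b) $ j)"
    using i a b by (simp add: mult_mat_vec_def scalar_prod_def mat_of_cols_def atLeast0LessThan)
  also have "\<dots> = (\<Sum>j<?k. ws ! j $ i * a $ j) + (\<Sum>j<?l. us ! j $ i * b $ j)"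
    unfolding split using a b by (simp add: nth_append)
  also have "\<dots> = (mat_of_cols n ws *\<^sub>v a + mat_of_cols n us *\<^sub>v b) $ i"
    using i a b by (simp add: mult_mat_vec_def scalar_prod_def mat_of_cols_def atLeast0LessThan)
  finally show "(mat_of_cols n (ws @ us) *\<^sub>v (a @\<^sub>v b)) $ i = \<dots>" .
qed simp

lemma mat_of_cols_append_mult_vec_zero:
  fixes a :: "'a :: field vec"
  assumes "set ws \<subseteq> carrier_vec n" "set us \<subseteq> carrier_vec n" "a \<in> carrier_vec (length ws)"
  shows "mat_of_cols n (ws @ us) *\<^sub>v (a @\<^sub>v 0\<^sub>v (length us)) = mat_of_cols n ws *\<^sub>v a"
proof -
  have "mat_of_cols n ws *\<^sub>v a \<in> carrier_vec n" by (rule mult_mat_vec_carrier[OF mat_of_cols_carrier(1) assms(3)])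
  thus ?thesis using mat_of_cols_append_mult_vec[OF assms, of "0\<^sub>v (length us)"]
    by (simp add: mult_mat_vec_zero[OF mat_of_cols_carrier(1)])
qed

lemma mat_of_cols_single_mult_vec:
  fixes v :: "'a :: field vec"
  assumes "v \<in> carrier_vec n" "b \<in> carrier_vec 1"
  shows "mat_of_cols n [v] *\<^sub>v b = b $ 0 \<cdot>\<^sub>v v"
  using assms by (intro eq_vecI) (auto simp: mult_mat_vec_def scalar_prod_def mat_of_cols_def mult.commute)

lemma col_span_subset:
  assumes W: "vec_subspace n W" and ws: "set ws \<subseteq> W"
  shows "col_span n ws \<subseteq> W"
  using ws
proof (induction ws)
  case Nil
  have "mat_of_cols n [] *\<^sub>v x = 0\<^sub>v n" if "x \<in> carrier_vec 0" for x :: "'a vec"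
    using that by (intro eq_vecI) (auto simp: mult_mat_vec_def scalar_prod_def mat_of_cols_def)
  then show ?case using W by (auto simp: col_span_def vec_subspace_def)
next
  case (Cons w ws)
  have carrier: "set (w # ws) \<subseteq> carrier_vec n" using Cons.prems W by (auto simp: vec_subspace_def)
  show ?case
  proof
    fix y assume "y \<in> col_span n (w # ws)"
    then obtain x where x: "x \<in> carrier_vec (1 + length ws)" and y: "y = mat_of_cols n ([w] @ ws) *\<^sub>v x"
      by (auto simp: col_span_def)
    let ?a = "vec_first x 1" and ?b = "vec_last x (length ws)"
    have "y = mat_of_cols n [w] *\<^sub>v ?a + mat_of_cols n ws *\<^sub>v ?b"
      unfolding y using x carrier by (subst vec_first_last_append[OF x, symmetric], subst mat_of_cols_append_mult_vec) auto
    also have "\<dots> = ?a $ 0 \<cdot>\<^sub>v w + mat_of_cols n ws *\<^sub>v ?b"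
      using carrier by (subst mat_of_cols_single_mult_vec) auto
    finally have y: "y = ?a $ 0 \<cdot>\<^sub>v w + mat_of_cols n ws *\<^sub>v ?b" .
    have "mat_of_cols n ws *\<^sub>v ?b \<in> col_span n ws" unfolding col_span_def by (blast intro: vec_last_carrier)
    hence "mat_of_cols n ws *\<^sub>v ?b \<in> W" using Cons by auto
    with Cons.prems W show "y \<in> W" unfolding y by (auto simp: vec_subspace_def)
  qed
qed

text \<open>Pad \<open>M\<close> with zero rows to a singular square matrix and take a kernel vector of that.\<close>
lemma wide_mat_kernel:
  fixes M :: "'a :: field mat"
  assumes M: "M \<in> carrier_mat n k" and nk: "n < k"
  shows "\<exists>x\<in>carrier_vec k. x \<noteq> 0\<^sub>v k \<and> M *\<^sub>v x = 0\<^sub>v n"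
proof -
  define M' where "M' = mat k k (\<lambda>(i, j). if i < n then M $$ (i, j) else 0)"
  have M': "M' \<in> carrier_mat k k" by (simp add: M'_def)
  have "transpose_mat M' *\<^sub>v unit_vec k (k - 1) = 0\<^sub>v k"
    using nk by (intro eq_vecI) (auto simp: M'_def mult_mat_vec_def scalar_prod_def unit_vec_def intro!: sum.neutral)
  moreover have "unit_vec k (k - 1) \<noteq> (0\<^sub>v k :: 'a vec)"
    using nk by (metis diff_less index_unit_vec(1) index_zero_vec(1) less_nat_zero_code not_gr0 zero_less_one zero_neq_one)
  ultimately have "det (transpose_mat M') = 0"
    using det_0_iff_vec_prod_zero[of "transpose_mat M'" k] M' by (auto intro!: exI[of _ "unit_vec k (k - 1)"])
  hence "det M' = 0" using det_transpose[OF M'] by simp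
  then obtain x where x: "x \<in> carrier_vec k" "x \<noteq> 0\<^sub>v k" "M' *\<^sub>v x = 0\<^sub>v k"
    using det_0_iff_vec_prod_zero[OF M'] by auto
  have "M *\<^sub>v x = 0\<^sub>v n"
  proof (rule eq_vecI)
    fix i assume "i < dim_vec (0\<^sub>v n :: 'a vec)"
    hence i: "i < n" by simp
    have "(M' *\<^sub>v x) $ i = 0" using x(3) i nk by simp
    thus "(M *\<^sub>v x) $ i = 0\<^sub>v n $ i"
      using i nk M x(1) by (simp add: M'_def mult_mat_vec_def scalar_prod_def row_def)
  qed (use M in simp)
  with x show ?thesis by auto
qed

lemma lin_indpt_cols_length:
  assumes "lin_indpt_cols n ws" shows "length ws \<le> n"
  using wide_mat_kernel[of "mat_of_cols n ws" n "length ws"] assms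
  by (force simp: lin_indpt_cols_def)

lemma lin_indpt_cols_snoc:
  fixes v :: "'a :: field vec"
  assumes li: "lin_indpt_cols n ws" and ws: "set ws \<subseteq> carrier_vec n" and v: "v \<in> carrier_vec n"
    and v_new: "v \<notin> col_span n ws"
  shows "lin_indpt_cols n (ws @ [v])"
  unfolding lin_indpt_cols_def
proof (intro ballI impI)
  let ?k = "length ws"
  fix x assume x: "x \<in> carrier_vec (length (ws @ [v]))" and eq: "mat_of_cols n (ws @ [v]) *\<^sub>v x = 0\<^sub>v n"
  define a where "a = vec_first x ?k"
  define b where "b = vec_last x 1 $ 0"
  have a: "a \<in> carrier_vec ?k" unfolding a_def by simp
  have x_split: "x = a @\<^sub>v vec_last x 1" unfolding a_def using vec_first_last_append x by simp
  hence sum_zero: "mat_of_cols n ws *\<^sub>v a + b \<cdot>\<^sub>v v = 0\<^sub>v n"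
    using eq ws v a mat_of_cols_append_mult_vec[OF ws _ a, of "[v]" "vec_last x 1"]
    by (simp add: mat_of_cols_single_mult_vec b_def)
  have sum0: "mat_of_cols n ws *\<^sub>v a = (- b) \<cdot>\<^sub>v v"
  proof (rule eq_vecI)
    fix i assume i: "i < dim_vec ((- b) \<cdot>\<^sub>v v)"
    have "(mat_of_cols n ws *\<^sub>v a + b \<cdot>\<^sub>v v) $ i = 0" using sum_zero i v by simp
    thus "(mat_of_cols n ws *\<^sub>v a) $ i = ((- b) \<cdot>\<^sub>v v) $ i" using i v a by (simp add: eq_neg_iff_add_eq_0)
  qed (use v in simp)
  have b0: "b = 0"
  proof (rule ccontr)
    assume "b \<noteq> 0"
    hence "v = mat_of_cols n ws *\<^sub>v ((- 1 / b) \<cdot>\<^sub>v a)"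
      using a v by (simp add: mult_mat_vec[OF mat_of_cols_carrier(1)] sum0 smult_smult_assoc)
    hence "v \<in> col_span n ws" using a unfolding col_span_def by force
    with v_new show False ..
  qed
  hence "mat_of_cols n ws *\<^sub>v a = 0\<^sub>v n" using sum0 v by (auto intro!: eq_vecI)
  hence "a = 0\<^sub>v ?k" using li a unfolding lin_indpt_cols_def by simp
  moreover have "vec_last x 1 = 0\<^sub>v 1" using b0 unfolding b_def by (intro eq_vecI) auto
  ultimately show "x = 0\<^sub>v (length (ws @ [v]))" using x_split by (auto intro!: eq_vecI)
qed

lemma lin_indpt_cols_extend:
  assumes W: "vec_subspace n W"
  shows "set ws \<subseteq> W \<Longrightarrow> lin_indpt_cols n ws \<Longrightarrow>
    \<exists>us. set us \<subseteq> W \<and> lin_indpt_cols n (ws @ us) \<and> W \<subseteq> col_span n (ws @ us)"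
proof (induction "n - length ws" arbitrary: ws rule: less_induct)
  case less
  show ?case
  proof (cases "W \<subseteq> col_span n ws")
    case True
    then show ?thesis using less.prems by (intro exI[of _ "[]"]) auto
  next
    case False
    then obtain v where v: "v \<in> W" "v \<notin> col_span n ws" by auto
    have li: "lin_indpt_cols n (ws @ [v])"
      by (rule lin_indpt_cols_snoc) (use less.prems v W in \<open>auto simp: vec_subspace_def\<close>)
    hence "n - length (ws @ [v]) < n - length ws" using lin_indpt_cols_length[OF li] by simp
    from less.hyps[OF this] li less.prems v obtain us where
      "set us \<subseteq> W" "lin_indpt_cols n ((ws @ [v]) @ us)" "W \<subseteq> col_span n ((ws @ [v]) @ us)" by auto
    then show ?thesis using v by (intro exI[of _ "v # us"]) auto
  qed
qed

lemma vec_subspace_basis: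
  assumes W: "vec_subspace n W"
  obtains ws where "set ws \<subseteq> W" "lin_indpt_cols n ws" "col_span n ws = W"
proof -
  obtain ws where "set ws \<subseteq> W" "lin_indpt_cols n ws" "W \<subseteq> col_span n ws"
    using lin_indpt_cols_extend[OF W, of "[]"] by (force simp: lin_indpt_cols_def intro: eq_vecI)
  with col_span_subset[OF W] show ?thesis by (intro that) auto
qed

text \<open>If \<open>k < n\<close> columns spanned \<open>\<FF>\<^sup>n\<close>, the \<open>n \<times> n\<close> identity would factor through a \<open>k \<times> n\<close> matrix,
  which has a nontrivial kernel.\<close>
lemma spanning_lin_indpt_cols_length:
  fixes ws :: "'a :: field vec list"
  assumes li: "lin_indpt_cols n ws" and span: "carrier_vec n \<subseteq> col_span n ws"
  shows "length ws = n"
proof (rule antisym[OF lin_indpt_cols_length[OF li]], rule ccontr)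
  let ?k = "length ws" and ?P = "mat_of_cols n ws"
  assume "\<not> n \<le> ?k"
  have "unit_vec n j \<in> col_span n ws" for j using span by auto
  hence "\<forall>j. \<exists>x. j < n \<longrightarrow> x \<in> carrier_vec ?k \<and> unit_vec n j = ?P *\<^sub>v x"
    unfolding col_span_def by blast
  then obtain x where x: "\<And>j. j < n \<Longrightarrow> x j \<in> carrier_vec ?k \<and> unit_vec n j = ?P *\<^sub>v x j"
    by metis
  define X where "X = mat ?k n (\<lambda>(i, j). x j $ i)"
  have X: "X \<in> carrier_mat ?k n" by (simp add: X_def)
  have col_X: "col X j = x j" if "j < n" for j
    using x[OF that] that by (intro eq_vecI) (auto simp: X_def)
  have PX: "?P * X = 1\<^sub>m n"
  proof (rule eq_matI)
    fix i j assume "i < dim_row (1\<^sub>m n :: 'a mat)" "j < dim_col (1\<^sub>m n :: 'a mat)"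
    hence ij: "i < n" "j < n" by auto
    have "(?P * X) $$ (i, j) = (?P *\<^sub>v x j) $ i" using ij X by (simp add: col_X mult_mat_vec_def)
    also have "\<dots> = unit_vec n j $ i" using x[OF ij(2)] by simp
    also have "\<dots> = 1\<^sub>m n $$ (i, j)" using ij by simp
    finally show "(?P * X) $$ (i, j) = 1\<^sub>m n $$ (i, j)" .
  qed (use X in auto)
  obtain y where y: "y \<in> carrier_vec n" "y \<noteq> 0\<^sub>v n" "X *\<^sub>v y = 0\<^sub>v ?k"
    using wide_mat_kernel[OF X] \<open>\<not> n \<le> ?k\<close> by auto
  have "y = (?P * X) *\<^sub>v y" using y by (simp add: PX)
  also have "\<dots> = ?P *\<^sub>v (X *\<^sub>v y)" using X y by (intro assoc_mult_mat_vec) auto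
  also have "\<dots> = 0\<^sub>v n" using y by (simp add: mult_mat_vec_zero[OF mat_of_cols_carrier(1)])
  finally show False using y by simp
qed

lemma vec_subspace_adapted_basis:
  fixes W :: "'a :: field vec set"
  assumes W: "vec_subspace n W"
  obtains m P Q where "m \<le> n" "P \<in> carrier_mat n n" "Q \<in> carrier_mat n n" "P * Q = 1\<^sub>m n" "Q * P = 1\<^sub>m n"
    "W = {P *\<^sub>v (v @\<^sub>v 0\<^sub>v (n - m)) | v. v \<in> carrier_vec m}"
proof -
  obtain ws where ws: "set ws \<subseteq> W" "lin_indpt_cols n ws" "col_span n ws = W"
    using vec_subspace_basis[OF W] .
  have ws_carrier: "set ws \<subseteq> carrier_vec n" using ws(1) W by (auto simp: vec_subspace_def)
  obtain us where us: "set us \<subseteq> carrier_vec n" "lin_indpt_cols n (ws @ us)" "carrier_vec n \<subseteq> col_span n (ws @ us)"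
    using lin_indpt_cols_extend[OF vec_subspace_carrier ws_carrier ws(2)] by auto
  define m where "m = length ws"
  define P where "P = mat_of_cols n (ws @ us)"
  have len: "length (ws @ us) = n" by (rule spanning_lin_indpt_cols_length[OF us(2,3)])
  hence mn: "m \<le> n" and len_us: "length us = n - m" unfolding m_def by auto
  have P: "P \<in> carrier_mat n n" unfolding P_def using len by auto
  have "det P \<noteq> 0"
  proof
    assume "det P = 0"
    then obtain x where "x \<in> carrier_vec n" "x \<noteq> 0\<^sub>v n" "P *\<^sub>v x = 0\<^sub>v n"
      using det_0_iff_vec_prod_zero[OF P] by auto
    with us(2) len show False unfolding lin_indpt_cols_def P_def by auto
  qed
  from det_non_zero_imp_unit[OF P this, unfolded Units_def, of "()"]
  obtain Q where "Q \<in> carrier_mat n n" "Q * P = 1\<^sub>m n" "P * Q = 1\<^sub>m n"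
    by (auto simp: ring_mat_def)
  moreover have "P *\<^sub>v (v @\<^sub>v 0\<^sub>v (n - m)) = mat_of_cols n ws *\<^sub>v v" if "v \<in> carrier_vec m" for v
    unfolding P_def len_us[symmetric]
    by (rule mat_of_cols_append_mult_vec_zero) (use ws_carrier us that m_def in auto)
  hence "W = {P *\<^sub>v (v @\<^sub>v 0\<^sub>v (n - m)) | v. v \<in> carrier_vec m}"
    unfolding ws(3)[symmetric] col_span_def m_def[symmetric] Setcompr_eq_image by (simp cong: image_cong)
  ultimately show thesis using that mn P by blast
qed

lemma append_zero_vec_carrier:
  "v \<in> carrier_vec m \<Longrightarrow> m \<le> n \<Longrightarrow> v @\<^sub>v 0\<^sub>v (n - m) \<in> carrier_vec n"
  by (intro carrier_vecI) simp

lemma mult_mat_vec_left_inverse: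
  fixes P Q :: "'a :: semiring_1 mat"
  assumes "P \<in> carrier_mat n n" "Q \<in> carrier_mat n n" "Q * P = 1\<^sub>m n" "x \<in> carrier_vec n"
  shows "Q *\<^sub>v (P *\<^sub>v x) = x"
proof -
  have "Q *\<^sub>v (P *\<^sub>v x) = (Q * P) *\<^sub>v x" using assoc_mult_mat_vec[of Q n n P n x] assms by simp
  thus ?thesis using assms by simp
qed

definition linear_embedding :: "nat \<Rightarrow> nat \<Rightarrow> ('a :: field vec \<Rightarrow> 'a vec) \<Rightarrow> bool" where
  "linear_embedding m n h \<longleftrightarrow> (\<forall>v\<in>carrier_vec m. h v \<in> carrier_vec n) \<and> inj_on h (carrier_vec m) \<and>
     (\<forall>v\<in>carrier_vec m. \<forall>w\<in>carrier_vec m. h (v + w) = h v + h w) \<and>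
     (\<forall>a. \<forall>v\<in>carrier_vec m. h (a \<cdot>\<^sub>v v) = a \<cdot>\<^sub>v h v)"

lemma linear_embedding_zero:
  fixes h :: "'a :: field vec \<Rightarrow> 'a vec"
  assumes "linear_embedding m n h" shows "h (0\<^sub>v m) = 0\<^sub>v n"
proof -
  have "0 \<cdot>\<^sub>v 0\<^sub>v m = (0\<^sub>v m :: 'a vec)" by (intro eq_vecI) auto
  hence "h (0\<^sub>v m) = h (0 \<cdot>\<^sub>v 0\<^sub>v m)" by simp
  also have "\<dots> = 0 \<cdot>\<^sub>v h (0\<^sub>v m)" using assms by (simp add: linear_embedding_def)
  also have "\<dots> = 0\<^sub>v n"
  proof -
    have "h (0\<^sub>v m) \<in> carrier_vec n" using assms by (simp add: linear_embedding_def)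
    thus ?thesis by (intro eq_vecI) auto
  qed
  finally show ?thesis .
qed

lemma linear_embedding_pad_zero:
  fixes P :: "'a :: field mat"
  assumes P: "P \<in> carrier_mat n n" and Q: "Q \<in> carrier_mat n n" "Q * P = 1\<^sub>m n" and mn: "m \<le> n"
  shows "linear_embedding m n (\<lambda>v. P *\<^sub>v (v @\<^sub>v 0\<^sub>v (n - m)))"
  unfolding linear_embedding_def
proof (intro conjI ballI allI)
  note pad = append_zero_vec_carrier[OF _ mn]
  fix v :: "'a vec" assume v: "v \<in> carrier_vec m"
  show "P *\<^sub>v (v @\<^sub>v 0\<^sub>v (n - m)) \<in> carrier_vec n" by (rule mult_mat_vec_carrier[OF P pad[OF v]])
  fix w :: "'a vec" assume w: "w \<in> carrier_vec m"
  have "(v + w) @\<^sub>v 0\<^sub>v (n - m) = (v @\<^sub>v 0\<^sub>v (n - m)) + (w @\<^sub>v 0\<^sub>v (n - m))"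
    using v w by (intro eq_vecI) auto
  thus "P *\<^sub>v ((v + w) @\<^sub>v 0\<^sub>v (n - m)) = P *\<^sub>v (v @\<^sub>v 0\<^sub>v (n - m)) + P *\<^sub>v (w @\<^sub>v 0\<^sub>v (n - m))"
    using P pad[OF v] pad[OF w] by (simp add: mult_add_distrib_mat_vec)
next
  fix a and v :: "'a vec" assume v: "v \<in> carrier_vec m"
  have "(a \<cdot>\<^sub>v v) @\<^sub>v 0\<^sub>v (n - m) = a \<cdot>\<^sub>v (v @\<^sub>v 0\<^sub>v (n - m))" using v by (intro eq_vecI) auto
  thus "P *\<^sub>v ((a \<cdot>\<^sub>v v) @\<^sub>v 0\<^sub>v (n - m)) = a \<cdot>\<^sub>v (P *\<^sub>v (v @\<^sub>v 0\<^sub>v (n - m)))"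
    using P append_zero_vec_carrier[OF v mn] by (simp add: mult_mat_vec)
next
  show "inj_on (\<lambda>v. P *\<^sub>v (v @\<^sub>v 0\<^sub>v (n - m))) (carrier_vec m)"
  proof (rule inj_onI)
    fix v w :: "'a vec" assume vw: "v \<in> carrier_vec m" "w \<in> carrier_vec m"
      and "P *\<^sub>v (v @\<^sub>v 0\<^sub>v (n - m)) = P *\<^sub>v (w @\<^sub>v 0\<^sub>v (n - m))"
    hence "v @\<^sub>v 0\<^sub>v (n - m) = w @\<^sub>v 0\<^sub>v (n - m)"
      using mult_mat_vec_left_inverse[OF P Q append_zero_vec_carrier[OF _ mn]] vw by metis
    thus "v = w" using append_vec_eq[OF vw] by blast
  qed
qed

lemma char_poly_four_block_lower_zero:
  fixes B :: "'a :: idom mat"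
  assumes B: "B \<in> carrier_mat m m" and C: "C \<in> carrier_mat m k" and D: "D \<in> carrier_mat k k"
  shows "char_poly (four_block_mat B C (0\<^sub>m k m) D) = char_poly B * char_poly D"
proof -
  let ?cm = "\<lambda>A. [:0, 1:] \<cdot>\<^sub>m 1\<^sub>m (dim_row A) + map_mat (\<lambda>a. [:- a:]) A"
  have "?cm (four_block_mat B C (0\<^sub>m k m) D) = four_block_mat (?cm B) (map_mat (\<lambda>a. [:- a:]) C) (0\<^sub>m k m) (?cm D)"
    using B C D by (intro eq_matI) (auto simp: one_poly_def)
  moreover have "det \<dots> = det (?cm B) * det (?cm D)"
    by (rule det_four_block_mat_lower_left_zero) (use B C D in auto)
  ultimately show ?thesis unfolding char_poly_defs by simp
qed

lemma four_block_lower_zero_mult_pad: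
  fixes B :: "'a :: field mat"
  assumes B: "B \<in> carrier_mat m m" and C: "C \<in> carrier_mat m k" and D: "D \<in> carrier_mat k k"
    and v: "v \<in> carrier_vec m"
  shows "four_block_mat B C (0\<^sub>m k m) D *\<^sub>v (v @\<^sub>v 0\<^sub>v k) = (B *\<^sub>v v) @\<^sub>v 0\<^sub>v k"
proof -
  have "0\<^sub>m k m *\<^sub>v v = (0\<^sub>v k :: 'a vec)" using v by (intro eq_vecI) auto
  thus ?thesis using four_block_mat_mult_vec[OF B C zero_carrier_mat D v zero_carrier_vec] B v
    by (simp add: mult_mat_vec_zero[OF C] mult_mat_vec_zero[OF D])
qed

lemma invariant_subspace_block_form:
  fixes A :: "'a :: field mat"
  assumes A: "A \<in> carrier_mat n n" and P: "P \<in> carrier_mat n n" and Q: "Q \<in> carrier_mat n n" "Q * P = 1\<^sub>m n"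
    and mn: "m \<le> n" and W: "W = {P *\<^sub>v (v @\<^sub>v 0\<^sub>v (n - m)) | v. v \<in> carrier_vec m}"
    and inv: "\<forall>w\<in>W. A *\<^sub>v w \<in> W"
  obtains B C D where "B \<in> carrier_mat m m" "C \<in> carrier_mat m (n - m)" "D \<in> carrier_mat (n - m) (n - m)"
    "Q * A * P = four_block_mat B C (0\<^sub>m (n - m) m) D"
proof -
  define M where "M = Q * A * P"
  have M: "M \<in> carrier_mat n n" unfolding M_def using Q A P by auto
  obtain B C Z D where split: "split_block M m m = (B, C, Z, D)" by (metis prod_cases4)
  have dims: "dim_row M = m + (n - m)" "dim_col M = m + (n - m)" using M mn by auto
  note blocks = split_block[OF split dims]
  have Z: "Z = mat (n - m) m (\<lambda>(i, j). M $$ (i + m, j))"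
    using split M by (simp add: split_block_def Let_def)
  have "Z = 0\<^sub>m (n - m) m"
  proof (rule eq_matI)
    fix i j assume "i < dim_row (0\<^sub>m (n - m) m :: 'a mat)" "j < dim_col (0\<^sub>m (n - m) m :: 'a mat)"
    hence ij: "i < n - m" "j < m" by auto
    have e_j: "unit_vec n j = unit_vec m j @\<^sub>v 0\<^sub>v (n - m)"
      using ij by (intro eq_vecI) (auto simp: unit_vec_def)
    have "P *\<^sub>v (unit_vec m j @\<^sub>v 0\<^sub>v (n - m)) \<in> W" unfolding W using ij by auto
    hence "P *\<^sub>v unit_vec n j \<in> W" unfolding e_j .
    hence "A *\<^sub>v (P *\<^sub>v unit_vec n j) \<in> W" using inv by blast
    then obtain c where c: "c \<in> carrier_vec m" "A *\<^sub>v (P *\<^sub>v unit_vec n j) = P *\<^sub>v (c @\<^sub>v 0\<^sub>v (n - m))"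
      unfolding W by blast
    have "M *\<^sub>v unit_vec n j = (Q * A) *\<^sub>v (P *\<^sub>v unit_vec n j)"
      unfolding M_def by (rule assoc_mult_mat_vec) (use Q A P in auto)
    also have "\<dots> = Q *\<^sub>v (A *\<^sub>v (P *\<^sub>v unit_vec n j))"
      by (rule assoc_mult_mat_vec) (use Q A P in auto)
    also have "\<dots> = c @\<^sub>v 0\<^sub>v (n - m)"
      unfolding c(2) by (rule mult_mat_vec_left_inverse[OF P Q append_zero_vec_carrier[OF c(1) mn]])
    finally have "(M *\<^sub>v unit_vec n j) $ (i + m) = 0" using ij c by simp
    moreover have "(M *\<^sub>v unit_vec n j) $ (i + m) = M $$ (i + m, j)"
      using M ij by (simp add: scalar_prod_right_unit)
    ultimately show "Z $$ (i, j) = 0\<^sub>m (n - m) m $$ (i, j)"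
      unfolding Z using ij by simp
  qed (simp_all add: Z)
  with blocks show thesis by (intro that[of B C D]) (simp_all add: M_def)
qed

lemma block_triangular_conjugate:
  fixes A :: "'a :: field mat"
  assumes A: "A \<in> carrier_mat n n" and P: "P \<in> carrier_mat n n" and Q: "Q \<in> carrier_mat n n"
    and PQ: "P * Q = 1\<^sub>m n" and QP: "Q * P = 1\<^sub>m n" and mn: "m \<le> n"
    and B: "B \<in> carrier_mat m m" and C: "C \<in> carrier_mat m (n - m)" and D: "D \<in> carrier_mat (n - m) (n - m)"
    and M: "Q * A * P = four_block_mat B C (0\<^sub>m (n - m) m) D"
  shows "char_poly A = char_poly B * char_poly D"
    and "v \<in> carrier_vec m \<Longrightarrow> A *\<^sub>v (P *\<^sub>v (v @\<^sub>v 0\<^sub>v (n - m))) = P *\<^sub>v ((B *\<^sub>v v) @\<^sub>v 0\<^sub>v (n - m))"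
proof -
  define F where "F = four_block_mat B C (0\<^sub>m (n - m) m) D"
  have F: "F \<in> carrier_mat n n" unfolding F_def using four_block_carrier_mat[OF B D] mn by simp
  have "P * F * Q = (P * Q) * A * (P * Q)"
    unfolding F_def M[symmetric] using A P Q by (simp add: assoc_mult_mat[of _ n n _ n _ n])
  hence A_sim: "A = P * F * Q" using A PQ by simp
  have "char_poly A = char_poly F"
    by (rule char_poly_similar, rule similar_matI[OF _ PQ QP A_sim]) (use A P Q F in auto)
  thus "char_poly A = char_poly B * char_poly D"
    unfolding F_def by (simp add: char_poly_four_block_lower_zero[OF B C D])
  assume v: "v \<in> carrier_vec m"
  have pad: "v @\<^sub>v 0\<^sub>v (n - m) \<in> carrier_vec n" by (rule append_zero_vec_carrier[OF v mn])
  have "A *\<^sub>v (P *\<^sub>v (v @\<^sub>v 0\<^sub>v (n - m))) = (P * F) *\<^sub>v (Q *\<^sub>v (P *\<^sub>v (v @\<^sub>v 0\<^sub>v (n - m))))"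
    unfolding A_sim by (rule assoc_mult_mat_vec) (use P F Q pad in auto)
  also have "\<dots> = P *\<^sub>v (F *\<^sub>v (v @\<^sub>v 0\<^sub>v (n - m)))"
    unfolding mult_mat_vec_left_inverse[OF P Q QP pad] by (rule assoc_mult_mat_vec) (use P F pad in auto)
  also have "\<dots> = P *\<^sub>v ((B *\<^sub>v v) @\<^sub>v 0\<^sub>v (n - m))"
    unfolding F_def by (simp add: four_block_lower_zero_mult_pad[OF B C D v])
  finally show "A *\<^sub>v (P *\<^sub>v (v @\<^sub>v 0\<^sub>v (n - m))) = P *\<^sub>v ((B *\<^sub>v v) @\<^sub>v 0\<^sub>v (n - m))" .
qed

lemma invariant_subspace_restriction:
  fixes A :: "'a :: field mat"
  assumes A: "A \<in> carrier_mat n n" and W: "vec_subspace n W" and inv: "\<forall>w\<in>W. A *\<^sub>v w \<in> W"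
    and proper: "W \<noteq> carrier_vec n"
  obtains m B D h where "m < n" "B \<in> carrier_mat m m" "D \<in> carrier_mat (n - m) (n - m)"
    "char_poly A = char_poly B * char_poly D"
    "linear_embedding m n h" "h ` carrier_vec m = W" "\<And>v. v \<in> carrier_vec m \<Longrightarrow> A *\<^sub>v h v = h (B *\<^sub>v v)"
proof -
  obtain m P Q where mn: "m \<le> n" and P: "P \<in> carrier_mat n n" and Q: "Q \<in> carrier_mat n n"
    and PQ: "P * Q = 1\<^sub>m n" and QP: "Q * P = 1\<^sub>m n" and W_img: "W = {P *\<^sub>v (v @\<^sub>v 0\<^sub>v (n - m)) | v. v \<in> carrier_vec m}"
    using vec_subspace_adapted_basis[OF W] by blast
  obtain B C D where B: "B \<in> carrier_mat m m" and C: "C \<in> carrier_mat m (n - m)"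
    and D: "D \<in> carrier_mat (n - m) (n - m)" and M: "Q * A * P = four_block_mat B C (0\<^sub>m (n - m) m) D"
    using invariant_subspace_block_form[OF A P Q QP mn W_img inv] by blast
  note conj = block_triangular_conjugate[OF A P Q PQ QP mn B C D M]
  have "m < n"
  proof (rule ccontr)
    assume "\<not> m < n"
    hence "m = n" using mn by simp
    have "y \<in> W" if y: "y \<in> carrier_vec n" for y
    proof -
      have "Q *\<^sub>v y @\<^sub>v 0\<^sub>v (n - m) = Q *\<^sub>v y" using \<open>m = n\<close> Q y by (intro eq_vecI) auto
      hence "y = P *\<^sub>v (Q *\<^sub>v y @\<^sub>v 0\<^sub>v (n - m))"
        using mult_mat_vec_left_inverse[OF Q P PQ y] by simp
      thus "y \<in> W" unfolding W_img using Q y \<open>m = n\<close> by auto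
    qed
    with proper W show False by (auto simp: vec_subspace_def)
  qed
  moreover have "(\<lambda>v. P *\<^sub>v (v @\<^sub>v 0\<^sub>v (n - m))) ` carrier_vec m = W" unfolding W_img by blast
  ultimately show thesis
    using that[OF _ B D conj(1) linear_embedding_pad_zero[OF P Q QP mn]] conj(2) by blast
qed

section \<open>Invariant flags\<close>

definition invariant_flag :: "nat \<Rightarrow> 'a :: field mat \<Rightarrow> (nat \<Rightarrow> 'a vec set) \<Rightarrow> nat \<Rightarrow> bool" where
  "invariant_flag n A S k \<longleftrightarrow> S 0 = carrier_vec n \<and> S k = {0\<^sub>v n} \<and>
     (\<forall>i<k. vec_subspace n (S i) \<and> S (Suc i) \<subset> S i \<and> (\<forall>v\<in>S i. A *\<^sub>v v \<in> S i))"

lemma invariant_flagD: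
  fixes A :: "'a :: field mat"
  assumes flag: "invariant_flag n A S k" and A: "A \<in> carrier_mat n n" and i: "i \<le> k"
  shows "vec_subspace n (S i)" and "\<forall>v\<in>S i. A *\<^sub>v v \<in> S i"
proof -
  have "vec_subspace n (S i) \<and> (\<forall>v\<in>S i. A *\<^sub>v v \<in> S i)"
  proof (cases "i = k")
    case True
    then show ?thesis using flag A by (auto simp: invariant_flag_def vec_subspace_def mult_mat_vec_zero)
  qed (use flag i in \<open>auto simp: invariant_flag_def\<close>)
  thus "vec_subspace n (S i)" "\<forall>v\<in>S i. A *\<^sub>v v \<in> S i" by auto
qed

lemma invariant_flag_pullback:
  fixes A B :: "'a :: field mat"
  assumes flag: "invariant_flag n A S (Suc k)" and h: "linear_embedding m n h"
    and img: "h ` carrier_vec m = S 1" and B: "\<And>v. v \<in> carrier_vec m \<Longrightarrow> A *\<^sub>v h v = h (B *\<^sub>v v)"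
    and B_carrier: "B \<in> carrier_mat m m"
  shows "invariant_flag m B (\<lambda>j. {v \<in> carrier_vec m. h v \<in> S (Suc j)}) k"
proof -
  let ?T = "\<lambda>j. {v \<in> carrier_vec m. h v \<in> S (Suc j)}"
  have S_le: "S j \<subseteq> S 1" if "1 \<le> j" "j \<le> Suc k" for j
    using that
  proof (induction j rule: dec_induct)
    case (step j)
    have "\<forall>i<Suc k. S (Suc i) \<subset> S i" using flag by (simp add: invariant_flag_def)
    hence "S (Suc j) \<subset> S j" using step.prems by simp
    with step show ?case by auto
  qed simp
  have h0: "h (0\<^sub>v m) = 0\<^sub>v n" by (rule linear_embedding_zero[OF h])
  have inj: "inj_on h (carrier_vec m)" using h by (auto simp: linear_embedding_def)
  have "?T 0 = carrier_vec m" using img by auto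
  moreover have "?T k = {0\<^sub>v m}"
    using flag h0 inj_onD[OF inj] by (auto simp: invariant_flag_def)
  moreover have "vec_subspace m (?T i)" if "i < k" for i
    using flag that h h0 by (auto simp: invariant_flag_def vec_subspace_def linear_embedding_def)
  moreover have "?T (Suc i) \<subset> ?T i" if "i < k" for i
  proof -
    have "S (Suc (Suc i)) \<subset> S (Suc i)" using flag that by (auto simp: invariant_flag_def)
    moreover have "S (Suc i) \<subseteq> h ` carrier_vec m" using S_le[of "Suc i"] that img by simp
    ultimately show ?thesis by blast
  qed
  moreover have "B *\<^sub>v v \<in> ?T i" if "i < k" "v \<in> ?T i" for i v
    using flag that B B_carrier by (auto simp: invariant_flag_def simp flip: B)
  ultimately show ?thesis unfolding invariant_flag_def by blast
qed

theorem invariant_flag_root_counts: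
  fixes A :: "rat mat"
  assumes "A \<in> carrier_mat n n" "anosov_poly (char_poly A)" "invariant_flag n A S k"
  shows "k \<le> root_count (\<lambda>z. cmod z < 1) (map_poly of_rat (char_poly A))
       \<and> k \<le> root_count (\<lambda>z. 1 < cmod z) (map_poly of_rat (char_poly A))"
  using assms
proof (induction k arbitrary: n A S)
  case (Suc k)
  note A = Suc.prems(1) and flag = Suc.prems(3)
  have "S 1 \<subset> S 0" using flag by (auto simp: invariant_flag_def)
  hence proper: "S 1 \<noteq> carrier_vec n" using flag by (auto simp: invariant_flag_def)
  obtain m B D h where "m < n" and B: "B \<in> carrier_mat m m" and D: "D \<in> carrier_mat (n - m) (n - m)"
    and char: "char_poly A = char_poly B * char_poly D"
    and "linear_embedding m n h" "h ` carrier_vec m = S 1" "\<And>v. v \<in> carrier_vec m \<Longrightarrow> A *\<^sub>v h v = h (B *\<^sub>v v)"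
    by (rule invariant_subspace_restriction[OF A invariant_flagD[OF flag A] proper]) auto
  hence flag_B: "invariant_flag m B (\<lambda>j. {v \<in> carrier_vec m. h v \<in> S (Suc j)}) k"
    using invariant_flag_pullback[OF flag] B by blast
  have monic: "monic (char_poly B)" "monic (char_poly D)"
    using degree_monic_char_poly[OF B] degree_monic_char_poly[OF D] by auto
  have "anosov_poly (char_poly B)" "anosov_poly (char_poly D)"
    using anosov_poly_factor[of "char_poly B" "char_poly D"] anosov_poly_factor[of "char_poly D" "char_poly B"]
      Suc.prems(2) monic unfolding char by (simp_all add: mult.commute)
  moreover have "0 < degree (char_poly D)" using degree_monic_char_poly[OF D] \<open>m < n\<close> by simp
  moreover have nonzero: "map_poly of_rat (char_poly B) * map_poly of_rat (char_poly D) \<noteq> (0 :: complex poly)"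
    using monic by auto
  ultimately show ?case
    using Suc.IH[OF B _ flag_B] anosov_poly_root_counts[of "char_poly D"]
    unfolding char map_poly_of_rat_mult root_count_mult[OF nonzero] by simp
qed simp

section \<open>The lower central series\<close>

lemma lspan_least:
  assumes Z: "vec_subspace n Z" and X: "X \<subseteq> Z"
  shows "lspan n X \<subseteq> Z"
proof
  fix v assume "v \<in> lspan n X"
  thus "v \<in> Z" by (induction rule: lspan.induct) (use Z X in \<open>auto simp: vec_subspace_def\<close>)
qed

lemma vec_subspace_lspan:
  assumes "X \<subseteq> carrier_vec n" shows "vec_subspace n (lspan n X)"
  using lspan_least[OF vec_subspace_carrier assms]
  unfolding vec_subspace_def by (auto intro: lspan.intros)

lemma vec_subspace_preimage:
  assumes f: "f \<in> carrier_mat n n" and Z: "vec_subspace n Z"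
  shows "vec_subspace n {v \<in> carrier_vec n. f *\<^sub>v v \<in> Z}"
  using f Z mult_mat_vec_zero[OF f]
  by (auto simp: vec_subspace_def mult_add_distrib_mat_vec mult_mat_vec)

lemma lie_bracket_carrier:
  "lie_algebra n br \<Longrightarrow> x \<in> carrier_vec n \<Longrightarrow> y \<in> carrier_vec n \<Longrightarrow> br x y \<in> carrier_vec n"
  by (simp add: lie_algebra_def)

lemma lcs_subspace:
  assumes L: "lie_algebra n br" shows "vec_subspace n (lcs n br i)"
proof -
  have "vec_subspace n (lcs n br (Suc j))" for j
  proof (induction j)
    case (Suc j)
    hence "lcs n br (Suc j) \<subseteq> carrier_vec n" by (simp add: vec_subspace_def)
    hence "{br x y | x y. x \<in> carrier_vec n \<and> y \<in> lcs n br (Suc j)} \<subseteq> carrier_vec n"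
      using lie_bracket_carrier[OF L] by auto
    thus ?case by (simp add: vec_subspace_lspan)
  qed (simp add: vec_subspace_carrier)
  thus ?thesis by (cases i) (simp_all add: vec_subspace_carrier)
qed

lemma lcs_Suc_subset:
  assumes L: "lie_algebra n br" shows "lcs n br (Suc (Suc i)) \<subseteq> lcs n br (Suc i)"
proof (induction i)
  case 0
  show ?case using lcs_subspace[OF L, of 2] by (simp add: vec_subspace_def numeral_2_eq_2)
next
  case (Suc i)
  have "{br x y | x y. x \<in> carrier_vec n \<and> y \<in> lcs n br (Suc (Suc i))} \<subseteq> lcs n br (Suc (Suc i))"
    using Suc by (auto intro: lspan.gen)
  thus ?case by (subst lcs.simps(3)) (rule lspan_least[OF lcs_subspace[OF L]])
qed

lemma lcs_invariant:
  assumes L: "lie_algebra n br" and f: "lie_automorphism n br f"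
  shows "\<forall>v\<in>lcs n br i. f *\<^sub>v v \<in> lcs n br i"
proof -
  have f_carrier: "f \<in> carrier_mat n n" using f by (simp add: lie_automorphism_def)
  have "\<forall>v\<in>lcs n br (Suc j). f *\<^sub>v v \<in> lcs n br (Suc j)" for j
  proof (induction j)
    case (Suc j)
    let ?G = "{br x y | x y. x \<in> carrier_vec n \<and> y \<in> lcs n br (Suc j)}"
    have "?G \<subseteq> {v \<in> carrier_vec n. f *\<^sub>v v \<in> lcs n br (Suc (Suc j))}"
    proof
      fix z assume "z \<in> ?G"
      then obtain x y where z: "z = br x y" "x \<in> carrier_vec n" "y \<in> lcs n br (Suc j)" by blast
      have y: "y \<in> carrier_vec n" using z(3) lcs_subspace[OF L, of "Suc j"] unfolding vec_subspace_def by blast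
      have "f *\<^sub>v z = br (f *\<^sub>v x) (f *\<^sub>v y)" using f z y by (simp add: lie_automorphism_def)
      moreover have "f *\<^sub>v x \<in> carrier_vec n" using f_carrier z(2) by simp
      ultimately have "f *\<^sub>v z \<in> ?G" using Suc z(3) by blast
      thus "z \<in> {v \<in> carrier_vec n. f *\<^sub>v v \<in> lcs n br (Suc (Suc j))}"
        using lie_bracket_carrier[OF L z(2) y] z(1) by (auto intro: lspan.gen)
    qed
    hence "lspan n ?G \<subseteq> {v \<in> carrier_vec n. f *\<^sub>v v \<in> lcs n br (Suc (Suc j))}"
      by (rule lspan_least[OF vec_subspace_preimage[OF f_carrier lcs_subspace[OF L]]])
    thus ?case by auto
  qed (use f_carrier in simp)
  thus ?thesis using f_carrier by (cases i) auto
qed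

lemma lcs_stable:
  assumes "lcs n br (Suc (Suc i)) = lcs n br (Suc i)"
  shows "lcs n br (Suc i + d) = lcs n br (Suc i)"
  by (induction d) (use assms in auto)

lemma lcs_invariant_flag:
  assumes L: "lie_algebra n br" and c: "nilpotency_class n br c" and f: "lie_automorphism n br f"
  shows "invariant_flag n f (\<lambda>i. lcs n br (Suc i)) c"
  unfolding invariant_flag_def
proof (intro conjI allI impI)
  show "lcs n br (Suc c) = {0\<^sub>v n}" using c by (simp add: nilpotency_class_def)
  fix i assume "i < c"
  show "vec_subspace n (lcs n br (Suc i))" by (rule lcs_subspace[OF L])
  show "\<forall>v\<in>lcs n br (Suc i). f *\<^sub>v v \<in> lcs n br (Suc i)" by (rule lcs_invariant[OF L f])
  have "lcs n br (Suc (Suc i)) \<noteq> lcs n br (Suc i)"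
  proof
    assume "lcs n br (Suc (Suc i)) = lcs n br (Suc i)"
    hence "lcs n br (Suc i + (c - Suc i)) = lcs n br (Suc i + (Suc c - Suc i))"
      using lcs_stable by metis
    hence "lcs n br c = lcs n br (Suc c)" using \<open>i < c\<close> by simp
    thus False using c by (simp add: nilpotency_class_def)
  qed
  thus "lcs n br (Suc (Suc i)) \<subset> lcs n br (Suc i)" using lcs_Suc_subset[OF L] by blast
qed simp

lemma cpoly_char_poly: "f \<in> carrier_mat n n \<Longrightarrow> cpoly f = map_poly of_rat (char_poly f)"
  unfolding cpoly_def by (rule of_rat_hom.char_poly_hom)

lemma anosov_char_poly:
  assumes f: "anosov n br f" shows "anosov_poly (char_poly f)"
proof -
  have f_carrier: "f \<in> carrier_mat n n" using f by (simp add: anosov_def lie_automorphism_def)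
  have "coeff (char_poly f) 0 = det (- char_matrix f 0)"
    using char_poly_matrix[OF f_carrier, of 0] by (simp add: poly_0_coeff_0[symmetric])
  also have "- char_matrix f 0 = (- 1) \<cdot>\<^sub>m f"
    using f_carrier by (intro eq_matI) (auto simp: char_matrix_def)
  also have "det ((- 1) \<cdot>\<^sub>m f) = (- 1) ^ n * det f" using f_carrier by simp
  finally have "\<bar>coeff (char_poly f) 0\<bar> = 1"
    using f by (auto simp: anosov_def integer_like_def abs_mult)
  thus ?thesis using f degree_monic_char_poly[OF f_carrier]
    by (auto simp: anosov_poly_def anosov_def integer_like_def hyperbolic_def cpoly_char_poly[OF f_carrier])
qed

theorem mainTheorem10:
  fixes n c :: nat and br :: "rat vec \<Rightarrow> rat vec \<Rightarrow> rat vec" and f :: "rat mat"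
  assumes "lie_algebra n br"
    and "nilpotency_class n br c"
    and "anosov n br f"
  shows "min (n_small f) (n_large f) \<ge> c"
proof -
  have f: "lie_automorphism n br f" using assms(3) by (simp add: anosov_def)
  hence f_carrier: "f \<in> carrier_mat n n" by (simp add: lie_automorphism_def)
  have "n_small f = root_count (\<lambda>z. cmod z < 1) (map_poly of_rat (char_poly f))"
    "n_large f = root_count (\<lambda>z. 1 < cmod z) (map_poly of_rat (char_poly f))"
    unfolding n_small_def n_large_def root_count_def cpoly_char_poly[OF f_carrier] by simp_all
  with invariant_flag_root_counts[OF f_carrier anosov_char_poly[OF assms(3)]
      lcs_invariant_flag[OF assms(1,2) f]]
  show ?thesis by simp
qed

end
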